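(* Let $k\geq 3$ be an odd integer and $n$ a positive integer with $n\geq \frac{k-1}{2}$. Then the pair $(2n,kn)$ is tame, i.e. for every integer $c>kn$ there exists a tame polynomial automorphism $F$ of $\mathbb{C}^3$ with $\operatorname{mdeg}F=(2n,kn,c)$.
   Context: For a polynomial automorphism $F=(F_1,\ldots,F_n)$ of $\mathbb{C}^n$, its multidegree is $\operatorname{mdeg}F:=(\deg F_1,\ldots,\deg F_n)$, where $\deg$ is total degree. A map is elementary if it changes one coordinate $X_j$ to $X_j+g$ with $g$ a polynomial in the other variables and fixes the remaining coordinates. A polynomial automorphism is tame if it is a composition of invertible affine-linear maps and elementary maps. A pair $(a,b)$ of positive integers with $a<b$ and $a\nmid b$ is called tame if for every integer $c>b$ there exists a tame polynomial automorphism of $\mathbb{C}^3$ with multidegree $(a,b,c)$. *)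

theory Defs
  imports Complex_Main "HOL-Library.Poly_Mapping"
begin

text \<open>Polynomials over the complex numbers in variables X_0, X_1, X_2, ... :
  finitely supported maps from monomials (exponent vectors) to coefficients.
  Only the variables X_0, X_1, X_2 are used for maps of C^3.\<close>

type_synonym mpoly = "(nat \<Rightarrow>\<^sub>0 nat) \<Rightarrow>\<^sub>0 complex"

definition Const :: "complex \<Rightarrow> mpoly" where
  "Const c = Poly_Mapping.single 0 c"

definition Var :: "nat \<Rightarrow> mpoly" where
  "Var i = Poly_Mapping.single (Poly_Mapping.single i 1) 1"

definition mon_deg :: "(nat \<Rightarrow>\<^sub>0 nat) \<Rightarrow> nat" where
  "mon_deg m = (\<Sum>i\<in>Poly_Mapping.keys m. Poly_Mapping.lookup m i)"

text \<open>Total degree (the zero polynomial gets degree 0; irrelevant here).\<close>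
definition tdeg :: "mpoly \<Rightarrow> nat" where
  "tdeg p = Max (insert 0 (mon_deg ` Poly_Mapping.keys p))"

definition vars :: "mpoly \<Rightarrow> nat set" where
  "vars p = (\<Union>m\<in>Poly_Mapping.keys p. Poly_Mapping.keys m)"

definition subst :: "(nat \<Rightarrow> mpoly) \<Rightarrow> mpoly \<Rightarrow> mpoly" where
  "subst G p = (\<Sum>m\<in>Poly_Mapping.keys p. Const (Poly_Mapping.lookup p m) * (\<Prod>i\<in>Poly_Mapping.keys m. G i ^ Poly_Mapping.lookup m i))"

text \<open>Polynomial maps: component i is F i; maps of C^3 use components 0,1,2
  and act as identity (X_i) on all components i >= 3. Composition F o G.\<close>
definition pcomp :: "(nat \<Rightarrow> mpoly) \<Rightarrow> (nat \<Rightarrow> mpoly) \<Rightarrow> (nat \<Rightarrow> mpoly)" where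
  "pcomp F G = (\<lambda>i. subst G (F i))"

definition affine_aut3 :: "(nat \<Rightarrow> mpoly) \<Rightarrow> bool" where
  "affine_aut3 F \<longleftrightarrow> (\<exists>A b. (\<exists>B. \<forall>i<3. \<forall>l<3.
        (\<Sum>j<3. A i j * B j l) = (if i = l then 1 else 0) \<and>
        (\<Sum>j<3. B i j * A j l) = (if i = l then 1 else 0)) \<and>
     F = (\<lambda>i. if i < 3 then Const (b i) + (\<Sum>j<3. Const (A i j) * Var j) else Var i))"

definition elementary3 :: "(nat \<Rightarrow> mpoly) \<Rightarrow> bool" where
  "elementary3 F \<longleftrightarrow> (\<exists>j g. j < 3 \<and> vars g \<subseteq> {0,1,2} - {j} \<and>
     F = Var(j := Var j + g))"

inductive tame3 :: "(nat \<Rightarrow> mpoly) \<Rightarrow> bool" where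
  affine: "affine_aut3 F \<Longrightarrow> tame3 F"
| elem: "elementary3 F \<Longrightarrow> tame3 F"
| comp: "tame3 F \<Longrightarrow> tame3 G \<Longrightarrow> tame3 (pcomp F G)"

definition mdeg3 :: "(nat \<Rightarrow> mpoly) \<Rightarrow> nat \<times> nat \<times> nat" where
  "mdeg3 F = (tdeg (F 0), tdeg (F 1), tdeg (F 2))"

definition tame_pair :: "nat \<Rightarrow> nat \<Rightarrow> bool" where
  "tame_pair a b \<longleftrightarrow> 0 < a \<and> a < b \<and> \<not> a dvd b \<and>
     (\<forall>c>b. \<exists>F. tame3 F \<and> mdeg3 F = (a, b, c))"

end

theory Submission
  imports Defs "HOL-Computational_Algebra.Formal_Power_Series"
begin

(* Let k = 2m + 1, write X, Y, Z for the variables X_0, X_1, X_2 and put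
   W = Z^(2n).  Every c > kn can be written c = kn + d + 2np with 1 <= d <= 2n.  Let
     s = Z^n * (sum over i <= m of (k/2 gchoose i) X^i W^(m-i)),
   the series Z^(kn) (1 + X/W)^(k/2) truncated after X-degree m.  By Vandermonde's identity,
   s^2 and (X + W)^k agree in every term of X-degree at most m.  The map
     F = (X + W,  Y + s + Z^d,  Z + F_0^p (F_1^2 - F_0^k))
   is a composition of three elementary maps, hence tame.  Because m <= n, the difference
   F_1^2 - F_0^k has degree at most kn + d, while modulo the ideal (X, Y) one has
   F_1 == Z^(kn) + Z^d and F_2 == Z + 2 Z^c + Z^(2np + 2d); since these pure powers of Z
   reach the degree bounds, mdeg F = (2n, kn, c). *)

lemma Const_0 [simp]: "Const 0 = 0" by (simp add: Const_def)
lemma Const_1 [simp]: "Const 1 = 1" by (simp add: Const_def)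
lemma Const_add: "Const (a + b) = Const a + Const b" by (simp add: Const_def single_add)
lemma Const_diff: "Const (a - b) = Const a - Const b" by (simp add: Const_def single_diff)
lemma Const_mult: "Const (a * b) = Const a * Const b" by (simp add: Const_def mult_single)
lemma Const_of_nat: "Const (of_nat j) = of_nat j" by (simp add: Const_def)

lemma Const_sum: "finite A \<Longrightarrow> Const (\<Sum>x\<in>A. f x) = (\<Sum>x\<in>A. Const (f x))"
  by (induction A rule: finite_induct) (auto simp: Const_add)

definition eval_monomial :: "(nat \<Rightarrow> mpoly) \<Rightarrow> (nat \<Rightarrow>\<^sub>0 nat) \<Rightarrow> mpoly" where
  "eval_monomial G m = (\<Prod>i\<in>Poly_Mapping.keys m. G i ^ Poly_Mapping.lookup m i)"

lemma subst_eval_monomial: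
  "subst G p = (\<Sum>m\<in>Poly_Mapping.keys p. Const (Poly_Mapping.lookup p m) * eval_monomial G m)"
  by (simp add: subst_def eval_monomial_def)

lemma eval_monomial_superset:
  "finite S \<Longrightarrow> Poly_Mapping.keys m \<subseteq> S \<Longrightarrow>
   eval_monomial G m = (\<Prod>i\<in>S. G i ^ Poly_Mapping.lookup m i)"
  unfolding eval_monomial_def by (rule prod.mono_neutral_left) (auto simp: in_keys_iff)

lemma keys_add_monomial:
  "Poly_Mapping.keys (a + b :: nat \<Rightarrow>\<^sub>0 nat) = Poly_Mapping.keys a \<union> Poly_Mapping.keys b"
  by (auto simp: in_keys_iff lookup_add)

lemma eval_monomial_add: "eval_monomial G (a + b) = eval_monomial G a * eval_monomial G b"
proof -
  let ?S = "Poly_Mapping.keys a \<union> Poly_Mapping.keys b"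
  have "eval_monomial G (a + b) = (\<Prod>i\<in>?S. G i ^ Poly_Mapping.lookup (a + b) i)"
    by (rule eval_monomial_superset) (auto simp: keys_add_monomial)
  also have "\<dots> = (\<Prod>i\<in>?S. G i ^ Poly_Mapping.lookup a i) * (\<Prod>i\<in>?S. G i ^ Poly_Mapping.lookup b i)"
    by (simp add: lookup_add power_add prod.distrib)
  also have "\<dots> = eval_monomial G a * eval_monomial G b"
    by (simp add: eval_monomial_superset[of ?S a] eval_monomial_superset[of ?S b])
  finally show ?thesis .
qed

lemma subst_add: "subst G (p + q) = subst G p + subst G q"
  unfolding subst_eval_monomial
  by (rule setsum_keys_plus_distrib) (auto simp: Const_add algebra_simps)

lemma subst_single: "subst G (Poly_Mapping.single m v) = Const v * eval_monomial G m"
  by (simp add: subst_eval_monomial)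

lemma subst_0 [simp]: "subst G 0 = 0"
  by (simp add: subst_eval_monomial)

lemma subst_sum: "finite A \<Longrightarrow> subst G (\<Sum>x\<in>A. f x) = (\<Sum>x\<in>A. subst G (f x))"
  by (induction A rule: finite_induct) (auto simp: subst_add)

lemma mpoly_sum_of_terms:
  "(p::mpoly) = (\<Sum>m\<in>Poly_Mapping.keys p. Poly_Mapping.single m (Poly_Mapping.lookup p m))"
  by (rule poly_mapping_eqI) (auto simp: lookup_sum lookup_single when_def in_keys_iff)

lemma subst_mult: "subst G (p * q) = subst G p * subst G q"
proof -
  have "p * q = (\<Sum>a\<in>Poly_Mapping.keys p. \<Sum>b\<in>Poly_Mapping.keys q.
      Poly_Mapping.single (a + b) (Poly_Mapping.lookup p a * Poly_Mapping.lookup q b))"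
    by (subst mpoly_sum_of_terms[of p], subst mpoly_sum_of_terms[of q])
      (simp add: sum_product mult_single)
  then show ?thesis
    by (simp add: subst_sum subst_single eval_monomial_add Const_mult sum_product
        subst_eval_monomial[of G p] subst_eval_monomial[of G q] algebra_simps)
qed

lemma subst_Const [simp]: "subst G (Const c) = Const c"
  by (simp add: Const_def subst_single eval_monomial_def)

lemma subst_1 [simp]: "subst G 1 = 1"
  using subst_Const[of G 1] by simp

lemma subst_Var [simp]: "subst G (Var i) = G i"
  by (simp add: Var_def subst_single eval_monomial_def)

lemma subst_diff: "subst G (p - q) = subst G p - subst G q"
  using subst_add[of G "p - q" q] by (simp add: algebra_simps)

lemma subst_pow: "subst G (p ^ j) = subst G p ^ j"
  by (induction j) (auto simp: subst_mult)

lemmas subst_ring_hom = subst_add subst_diff subst_mult subst_pow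

section \<open>Upper bounds for the total degree\<close>

definition deg_le :: "mpoly \<Rightarrow> nat \<Rightarrow> bool" where
  "deg_le p D \<longleftrightarrow> (\<forall>m\<in>Poly_Mapping.keys p. mon_deg m \<le> D)"

lemma mon_deg_add: "mon_deg (a + b) = mon_deg a + mon_deg b"
  unfolding mon_deg_def by (rule setsum_keys_plus_distrib) auto

lemma keys_uminus_mpoly: "Poly_Mapping.keys (- (p::mpoly)) = Poly_Mapping.keys p"
  by (auto simp: in_keys_iff)

lemma deg_le_mono: "deg_le p D \<Longrightarrow> D \<le> D' \<Longrightarrow> deg_le p D'"
  by (auto simp: deg_le_def)

lemma deg_le_add: "deg_le p D \<Longrightarrow> deg_le q D \<Longrightarrow> deg_le (p + q) D"
  using keys_add[of p q] by (auto simp: deg_le_def)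

lemma deg_le_mult: "deg_le p D1 \<Longrightarrow> deg_le q D2 \<Longrightarrow> deg_le (p * q) (D1 + D2)"
  using keys_mult[of p q] by (force simp: deg_le_def mon_deg_add intro: add_mono)

lemma deg_le_pow: "deg_le p D \<Longrightarrow> deg_le (p ^ j) (j * D)"
proof (induction j)
  case 0 then show ?case by (simp add: deg_le_def mon_deg_def)
next
  case (Suc j) then show ?case using deg_le_mult[of p D "p ^ j" "j * D"] by simp
qed

lemma deg_le_Const: "deg_le (Const c) 0"
  by (simp add: deg_le_def Const_def mon_deg_def)

lemma deg_le_Var: "deg_le (Var i) 1"
  by (simp add: deg_le_def Var_def mon_deg_def)

lemma deg_le_Var_pow: "deg_le (Var i ^ j) j"
  using deg_le_pow[OF deg_le_Var, of i j] by simp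

lemma deg_le_sum: "finite A \<Longrightarrow> (\<And>x. x \<in> A \<Longrightarrow> deg_le (f x) D) \<Longrightarrow> deg_le (\<Sum>x\<in>A. f x) D"
proof (induction A rule: finite_induct)
  case empty then show ?case by (simp add: deg_le_def)
next
  case (insert x A) then show ?case by (simp add: deg_le_add)
qed

lemma tdeg_eqI:
  assumes "deg_le p D" and "Poly_Mapping.lookup p m \<noteq> 0" and "mon_deg m = D"
  shows "tdeg p = D"
proof (rule antisym)
  show "tdeg p \<le> D" using assms(1) by (auto simp: tdeg_def deg_le_def)
  show "D \<le> tdeg p"
    unfolding tdeg_def assms(3)[symmetric] using assms(2) by (intro Max_ge) (auto simp: in_keys_iff)
qed

section \<open>Congruences modulo the ideal (X_0, X_1)\<close>

text \<open>The ideal generated by X_0 and X_1: every monomial contains one of them.\<close>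
definition in_XY :: "mpoly \<Rightarrow> bool" where
  "in_XY p \<longleftrightarrow> (\<forall>m\<in>Poly_Mapping.keys p.
     Poly_Mapping.lookup m 0 \<noteq> 0 \<or> Poly_Mapping.lookup m 1 \<noteq> 0)"

abbreviation cong_XY :: "mpoly \<Rightarrow> mpoly \<Rightarrow> bool" where
  "cong_XY p q \<equiv> in_XY (p - q)"

lemma in_XY_add: "in_XY p \<Longrightarrow> in_XY q \<Longrightarrow> in_XY (p + q)"
  using keys_add[of p q] unfolding in_XY_def by blast

lemma in_XY_diff: "in_XY p \<Longrightarrow> in_XY q \<Longrightarrow> in_XY (p - q)"
  using in_XY_add[of p "- q"] by (simp add: in_XY_def keys_uminus_mpoly)

lemma in_XY_mult: "in_XY p \<Longrightarrow> in_XY (p * q)"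
  using keys_mult[of p q] by (force simp: in_XY_def lookup_add)

lemma in_XY_Var: "i \<in> {0, 1} \<Longrightarrow> in_XY (Var i)"
  by (auto simp: in_XY_def Var_def)

lemma in_XY_0 [simp]: "in_XY 0"
  by (simp add: in_XY_def)

lemma in_XY_sum: "finite A \<Longrightarrow> (\<And>x. x \<in> A \<Longrightarrow> in_XY (f x)) \<Longrightarrow> in_XY (\<Sum>x\<in>A. f x)"
  by (induction A rule: finite_induct) (auto simp: in_XY_add)

lemma cong_XY_refl: "cong_XY p p"
  by simp

lemma cong_XY_add: "cong_XY p1 q1 \<Longrightarrow> cong_XY p2 q2 \<Longrightarrow> cong_XY (p1 + p2) (q1 + q2)"
  using in_XY_add[of "p1 - q1" "p2 - q2"] by (simp add: algebra_simps)

lemma cong_XY_diff: "cong_XY p1 q1 \<Longrightarrow> cong_XY p2 q2 \<Longrightarrow> cong_XY (p1 - p2) (q1 - q2)"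
  using in_XY_diff[of "p1 - q1" "p2 - q2"] by (simp add: algebra_simps)

lemma cong_XY_mult: "cong_XY p1 q1 \<Longrightarrow> cong_XY p2 q2 \<Longrightarrow> cong_XY (p1 * p2) (q1 * q2)"
proof -
  assume "cong_XY p1 q1" "cong_XY p2 q2"
  moreover have "p1 * p2 - q1 * q2 = (p1 - q1) * p2 + (p2 - q2) * q1"
    by (simp add: algebra_simps)
  ultimately show ?thesis by (simp add: in_XY_add in_XY_mult)
qed

lemma cong_XY_pow: "cong_XY p q \<Longrightarrow> cong_XY (p ^ j) (q ^ j)"
  by (induction j) (auto simp: cong_XY_refl intro: cong_XY_mult)

definition zcoeff :: "mpoly \<Rightarrow> nat \<Rightarrow> complex" where
  "zcoeff p j = Poly_Mapping.lookup p (Poly_Mapping.single 2 j)"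

lemma zcoeff_in_XY: "in_XY p \<Longrightarrow> zcoeff p j = 0"
proof (rule ccontr)
  assume "in_XY p" "zcoeff p j \<noteq> 0"
  then have "Poly_Mapping.single 2 j \<in> Poly_Mapping.keys p"
    by (simp add: zcoeff_def in_keys_iff)
  with \<open>in_XY p\<close> show False
    unfolding in_XY_def by (auto simp: lookup_single_not_eq)
qed

lemma zcoeff_cong: "cong_XY p q \<Longrightarrow> zcoeff p j = zcoeff q j"
  using zcoeff_in_XY[of "p - q" j] by (simp add: zcoeff_def lookup_minus)

lemma zcoeff_add: "zcoeff (p + q) j = zcoeff p j + zcoeff q j"
  by (simp add: zcoeff_def lookup_add)

lemma zcoeff_Var_pow: "zcoeff (Var 2 ^ i) j = (if i = j then 1 else 0)"
proof -
  have "Var l ^ i = Poly_Mapping.single (Poly_Mapping.single l i) 1" for l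
    by (induction i) (simp_all add: Var_def mult_single single_add[symmetric])
  then show ?thesis by (simp add: zcoeff_def lookup_single when_def inj_eq[OF inj_single])
qed

lemma tdeg_eq_zcoeff: "deg_le p D \<Longrightarrow> zcoeff p D \<noteq> 0 \<Longrightarrow> tdeg p = D"
  by (rule tdeg_eqI[of p D "Poly_Mapping.single 2 D"]) (auto simp: zcoeff_def mon_deg_def)

lemma vars_add: "vars p \<subseteq> S \<Longrightarrow> vars q \<subseteq> S \<Longrightarrow> vars (p + q) \<subseteq> S"
  using keys_add[of p q] unfolding vars_def by blast

lemma vars_diff: "vars p \<subseteq> S \<Longrightarrow> vars q \<subseteq> S \<Longrightarrow> vars (p - q) \<subseteq> S"
  using vars_add[of p S "- q"] by (simp add: vars_def keys_uminus_mpoly)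

lemma vars_mult: "vars p \<subseteq> S \<Longrightarrow> vars q \<subseteq> S \<Longrightarrow> vars (p * q) \<subseteq> S"
  using keys_mult[of p q] unfolding vars_def by (force simp: keys_add_monomial)

lemma vars_1: "vars 1 \<subseteq> S"
  by (simp add: vars_def)

lemma vars_pow: "vars p \<subseteq> S \<Longrightarrow> vars (p ^ j) \<subseteq> S"
  by (induction j) (auto simp: vars_1 vars_mult)

lemma vars_Const: "vars (Const c) \<subseteq> S"
  by (simp add: vars_def Const_def)

lemma vars_Var: "i \<in> S \<Longrightarrow> vars (Var i) \<subseteq> S"
  by (simp add: vars_def Var_def)

lemma vars_sum: "finite A \<Longrightarrow> (\<And>x. x \<in> A \<Longrightarrow> vars (f x) \<subseteq> S) \<Longrightarrow> vars (\<Sum>x\<in>A. f x) \<subseteq> S"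
proof (induction A rule: finite_induct)
  case empty then show ?case by (simp add: vars_def)
next
  case (insert x A) then show ?case by (simp add: vars_add)
qed

lemmas vars_intros = vars_add vars_diff vars_mult vars_pow vars_Const vars_Var vars_sum

lemma elementary3I:
  "j < 3 \<Longrightarrow> vars g \<subseteq> {0, 1, 2} - {j} \<Longrightarrow> elementary3 (Var(j := Var j + g))"
  unfolding elementary3_def by blast

section \<open>Homogeneous binomial sums\<close>

text \<open>hsum w K a = sum of a_i X_0^i w^(K-i) over i <= K; with w = X_2^(2n) these
  are the polynomials in which both (X_0 + w)^k and the square of the truncated root live.\<close>
definition hsum :: "mpoly \<Rightarrow> nat \<Rightarrow> (nat \<Rightarrow> complex) \<Rightarrow> mpoly" where
  "hsum w K a = (\<Sum>i\<le>K. Const (a i) * Var 0 ^ i * w ^ (K - i))"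

definition convolution :: "(nat \<Rightarrow> complex) \<Rightarrow> (nat \<Rightarrow> complex) \<Rightarrow> nat \<Rightarrow> complex" where
  "convolution a b s = (\<Sum>j\<le>s. a j * b (s - j))"

lemma hsum_mult:
  assumes a: "\<And>i. i > K \<Longrightarrow> a i = 0" and b: "\<And>i. i > L \<Longrightarrow> b i = 0"
  shows "hsum w K a * hsum w L b = hsum w (K + L) (convolution a b)"
proof -
  define g where "g i j = Const (a i * b j) * Var 0 ^ (i + j) * w ^ (K + L - (i + j))" for i j
  have "hsum w K a * hsum w L b = (\<Sum>i\<le>K. \<Sum>j\<le>L. g i j)"
    unfolding hsum_def sum_product
  proof (intro sum.cong refl)
    fix i j assume "i \<in> {..K}" "j \<in> {..L}"
    then have "K + L - (i + j) = (K - i) + (L - j)" by auto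
    then show "Const (a i) * Var 0 ^ i * w ^ (K - i) * (Const (b j) * Var 0 ^ j * w ^ (L - j)) = g i j"
      unfolding g_def by (simp add: Const_mult power_add algebra_simps)
  qed
  also have "\<dots> = (\<Sum>(i, j)\<in>{..K} \<times> {..L}. g i j)"
    by (simp add: sum.cartesian_product)
  also have "\<dots> = (\<Sum>(i, j)\<in>{(i, j). i + j \<le> K + L}. g i j)"
  proof (rule sum.mono_neutral_left)
    show "finite {(i, j). i + j \<le> K + L}"
      by (rule finite_subset[of _ "{..K + L} \<times> {..K + L}"]) auto
    show "\<forall>x\<in>{(i, j). i + j \<le> K + L} - {..K} \<times> {..L}. (case x of (i, j) \<Rightarrow> g i j) = 0"
    proof
      fix x assume "x \<in> {(i, j). i + j \<le> K + L} - {..K} \<times> {..L}"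
      then obtain i j where x: "x = (i, j)" and "\<not> (i \<le> K \<and> j \<le> L)" by auto
      then have "a i * b j = 0" using a b by (auto simp: not_le)
      then show "(case x of (i, j) \<Rightarrow> g i j) = 0" unfolding x g_def by (metis Const_0 mult_zero_left split_conv)
    qed
  qed auto
  also have "\<dots> = (\<Sum>s\<le>K + L. \<Sum>i\<le>s. g i (s - i))"
    by (rule sum.triangle_reindex_eq)
  also have "\<dots> = hsum w (K + L) (convolution a b)"
    unfolding hsum_def convolution_def
    by (intro sum.cong refl) (simp add: g_def Const_sum sum_distrib_right)
  finally show ?thesis .
qed

lemma hsum_mult_w:
  assumes "a (Suc K) = 0"
  shows "w * hsum w K a = hsum w (Suc K) a"
proof -
  have "w * hsum w K a = (\<Sum>i\<le>K. Const (a i) * Var 0 ^ i * w ^ (Suc K - i))"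
    unfolding hsum_def sum_distrib_left
    by (intro sum.cong refl) (simp add: Suc_diff_le algebra_simps)
  then show ?thesis unfolding hsum_def using assms by simp
qed

lemma hsum_binomial: "(Var 0 + w) ^ k = hsum w k (\<lambda>i. of_nat (k choose i))"
  unfolding hsum_def binomial_ring by (simp add: Const_of_nat)

lemma hsum_diff: "hsum w K a - hsum w K b = hsum w K (\<lambda>i. a i - b i)"
  unfolding hsum_def by (simp add: Const_diff sum_subtractf algebra_simps)

lemma hsum_cong_XY: "cong_XY (hsum w K a) (Const (a 0) * w ^ K)"
proof (cases K)
  case 0 then show ?thesis by (simp add: hsum_def)
next
  case (Suc K')
  have "hsum w K a - Const (a 0) * w ^ K
      = (\<Sum>i\<le>K'. Var 0 * (Const (a (Suc i)) * Var 0 ^ i * w ^ (K - Suc i)))"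
    unfolding hsum_def Suc sum.atMost_Suc_shift by (simp add: ac_simps)
  then show ?thesis by (simp add: in_XY_sum in_XY_mult in_XY_Var)
qed

text \<open>If w has degree at most e >= 1 and the coefficients vanish below J, the sum has degree
  at most J + e(K - J): the term with i = J dominates.\<close>
lemma hsum_deg_le:
  assumes w: "deg_le w e" and e: "e \<ge> 1" and JK: "J \<le> K" and a: "\<And>i. i < J \<Longrightarrow> a i = 0"
  shows "deg_le (hsum w K a) (J + e * (K - J))"
  unfolding hsum_def
proof (rule deg_le_sum)
  fix i assume i: "i \<in> {..K}"
  show "deg_le (Const (a i) * Var 0 ^ i * w ^ (K - i)) (J + e * (K - J))"
  proof (cases "i < J")
    case True then show ?thesis using a by (simp add: deg_le_def)
  next
    case False
    have split: "e * (K - J) = e * (K - i) + e * (i - J)" using False i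
      by (simp add: diff_mult_distrib2)
    have "i - J \<le> e * (i - J)" using e by simp
    then have "i \<le> J + e * (i - J)" using False by linarith
    then have "0 + i + (K - i) * e \<le> J + e * (K - J)"
      using split mult.commute[of "K - i" e] by linarith
    then show ?thesis
      by (intro deg_le_mono[OF deg_le_mult[OF deg_le_mult[OF deg_le_Const deg_le_Var_pow]
            deg_le_pow[OF w]]])
  qed
qed simp

section \<open>The truncated binomial series\<close>

definition trunc_binom :: "complex \<Rightarrow> nat \<Rightarrow> nat \<Rightarrow> complex" where
  "trunc_binom \<alpha> m i = (if i \<le> m then \<alpha> gchoose i else 0)"

lemma convolution_trunc_binom_low:
  assumes "i \<le> m"
  shows "convolution (trunc_binom \<alpha> m) (trunc_binom \<alpha> m) i = (\<alpha> + \<alpha>) gchoose i"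
proof -
  have "convolution (trunc_binom \<alpha> m) (trunc_binom \<alpha> m) i
      = (\<Sum>j\<in>{0..i}. (\<alpha> gchoose j) * (\<alpha> gchoose (i - j)))"
    unfolding convolution_def trunc_binom_def atLeast0AtMost[symmetric] using assms
    by (intro sum.cong) auto
  also have "\<dots> = (\<alpha> + \<alpha>) gchoose i"
    by (rule gbinomial_Vandermonde)
  finally show ?thesis .
qed

lemma convolution_trunc_binom_high:
  "convolution (trunc_binom \<alpha> m) (trunc_binom \<alpha> m) (Suc (2 * m)) = 0"
  unfolding convolution_def trunc_binom_def by (intro sum.neutral) auto

section \<open>The construction\<close>

definition W :: "nat \<Rightarrow> mpoly" where
  "W n = Var 2 ^ (2 * n)"

text \<open>Truncated square root of (X_0 + W)^k, up to the factor X_2^n: its square agrees with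
  (X_0 + W)^k in all terms of X_0-degree at most k div 2.\<close>
definition sqrt_part :: "nat \<Rightarrow> nat \<Rightarrow> mpoly" where
  "sqrt_part n k = Var 2 ^ n * hsum (W n) (k div 2) (trunc_binom (of_nat k / 2) (k div 2))"

definition comp0 :: "nat \<Rightarrow> mpoly" where
  "comp0 n = Var 0 + W n"

definition comp1 :: "nat \<Rightarrow> nat \<Rightarrow> nat \<Rightarrow> mpoly" where
  "comp1 n k d = Var 1 + sqrt_part n k + Var 2 ^ d"

definition comp2 :: "nat \<Rightarrow> nat \<Rightarrow> nat \<Rightarrow> nat \<Rightarrow> mpoly" where
  "comp2 n k d p = Var 2 + comp0 n ^ p * (comp1 n k d ^ 2 - comp0 n ^ k)"

definition tri_map :: "nat \<Rightarrow> nat \<Rightarrow> nat \<Rightarrow> nat \<Rightarrow> nat \<Rightarrow> mpoly" where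
  "tri_map n k d p = pcomp (Var(2 := Var 2 + (Var 0 ^ p * Var 1 ^ 2 - Var 0 ^ (p + k))))
     (pcomp (Var(0 := Var 0 + W n)) (Var(1 := Var 1 + (sqrt_part n k + Var 2 ^ d))))"

lemma vars_sqrt_part: "vars (sqrt_part n k) \<subseteq> {0, 2}"
  unfolding sqrt_part_def hsum_def W_def by (intro vars_intros) auto

lemma tame_tri_map: "tame3 (tri_map n k d p)"
  unfolding tri_map_def
proof (intro tame3.comp tame3.elem elementary3I)
  show "vars (W n) \<subseteq> {0, 1, 2} - {0}"
    unfolding W_def by (intro vars_intros) auto
  show "vars (sqrt_part n k + Var 2 ^ d) \<subseteq> {0, 1, 2} - {1}"
    using vars_add[OF vars_sqrt_part[of n k] vars_pow[OF vars_Var, of 2 "{0, 2}" d]] by auto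
  show "vars (Var 0 ^ p * Var 1 ^ 2 - Var 0 ^ (p + k)) \<subseteq> {0, 1, 2} - {2}"
    by (intro vars_intros) auto
qed auto

lemma tri_map_components:
  "tri_map n k d p 0 = comp0 n" "tri_map n k d p 1 = comp1 n k d"
  "tri_map n k d p 2 = comp2 n k d p"
  by (simp_all add: tri_map_def pcomp_def comp0_def comp1_def comp2_def W_def
      subst_ring_hom power_add algebra_simps)

section \<open>Degrees of the components\<close>

lemma deg_le_comp0: "n \<ge> 1 \<Longrightarrow> deg_le (comp0 n) (2 * n)"
  unfolding comp0_def W_def by (intro deg_le_add deg_le_mono[OF deg_le_Var] deg_le_Var_pow) simp

lemma comp0_cong_XY: "cong_XY (comp0 n) (W n)"
  unfolding comp0_def by (simp add: in_XY_Var)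

lemma tdeg_comp0: "n \<ge> 1 \<Longrightarrow> tdeg (comp0 n) = 2 * n"
  using deg_le_comp0 zcoeff_cong[OF comp0_cong_XY] by (simp add: tdeg_eq_zcoeff W_def zcoeff_Var_pow)

text \<open>For odd k = 2m + 1, the degree kn splits as n + 2nm, the degree of X_2^n W^m.\<close>
lemma odd_as_Suc: "odd k \<Longrightarrow> k = Suc (2 * (k div 2))"
  by presburger

lemma odd_times_split: fixes k n :: nat shows "odd k \<Longrightarrow> k * n = n + 2 * n * (k div 2)"
proof -
  assume "odd k"
  define m where "m = k div 2"
  have "k = Suc (2 * m)" unfolding m_def by (rule odd_as_Suc[OF \<open>odd k\<close>])
  then show ?thesis unfolding m_def[symmetric] by (simp add: algebra_simps)
qed

lemma deg_le_sqrt_part: "n \<ge> 1 \<Longrightarrow> odd k \<Longrightarrow> deg_le (sqrt_part n k) (k * n)"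
proof -
  assume "n \<ge> 1" "odd k"
  then have "deg_le (hsum (W n) (k div 2) (trunc_binom (of_nat k / 2) (k div 2))) (2 * n * (k div 2))"
    using hsum_deg_le[of "W n" "2 * n" 0] by (simp add: W_def deg_le_Var_pow)
  from deg_le_mult[OF deg_le_Var_pow this] show ?thesis
    unfolding sqrt_part_def odd_times_split[OF \<open>odd k\<close>] .
qed

lemma sqrt_part_cong_XY: "odd k \<Longrightarrow> cong_XY (sqrt_part n k) (Var 2 ^ (k * n))"
proof -
  assume "odd k"
  have "Var 2 ^ n * W n ^ (k div 2) = Var 2 ^ (k * n)"
    unfolding W_def odd_times_split[OF \<open>odd k\<close>] by (simp add: power_add power_mult)
  then show ?thesis
    unfolding sqrt_part_def
    using cong_XY_mult[OF cong_XY_refl[of "Var 2 ^ n"]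
        hsum_cong_XY[of "W n" "k div 2" "trunc_binom (of_nat k / 2) (k div 2)"]]
    by (simp add: trunc_binom_def)
qed

lemma comp1_cong_XY: "odd k \<Longrightarrow> cong_XY (comp1 n k d) (Var 2 ^ (k * n) + Var 2 ^ d)"
  using cong_XY_add[OF cong_XY_add[OF _ sqrt_part_cong_XY] cong_XY_refl, of "Var 1" 0 k n]
  unfolding comp1_def by (simp add: in_XY_Var)

lemma tdeg_comp1:
  assumes "n \<ge> 1" "odd k" "d < k * n"
  shows "tdeg (comp1 n k d) = k * n"
proof (rule tdeg_eq_zcoeff)
  show "deg_le (comp1 n k d) (k * n)"
    unfolding comp1_def using assms deg_le_sqrt_part odd_pos[OF assms(2)]
    by (intro deg_le_add deg_le_mono[OF deg_le_Var] deg_le_mono[OF deg_le_Var_pow]) auto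
  show "zcoeff (comp1 n k d) (k * n) \<noteq> 0"
    using assms(3) zcoeff_cong[OF comp1_cong_XY[OF assms(2)]]
    by (simp add: zcoeff_add zcoeff_Var_pow)
qed

text \<open>The key estimate: the square of the truncated root differs from (X_0 + W)^k only in
  terms of X_0-degree > k div 2, which have degree at most kn + 1 because k div 2 <= n.\<close>
lemma deg_le_sqrt_part_error:
  assumes "n \<ge> 1" "odd k" "k - 1 \<le> 2 * n"
  shows "deg_le (sqrt_part n k ^ 2 - comp0 n ^ k) (k * n + 1)"
proof -
  define m where "m = k div 2"
  define a where "a = trunc_binom (of_nat k / 2) m"
  have k: "k = Suc (2 * m)" using odd_as_Suc[OF assms(2)] by (simp add: m_def)
  have "sqrt_part n k ^ 2 = W n * (hsum (W n) m a * hsum (W n) m a)"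
    unfolding sqrt_part_def W_def m_def a_def by (simp add: power2_eq_square power_mult algebra_simps)
  also have "\<dots> = W n * hsum (W n) (2 * m) (convolution a a)"
    using hsum_mult[of m a m a] by (simp add: a_def trunc_binom_def mult_2)
  also have "\<dots> = hsum (W n) k (convolution a a)"
    unfolding k a_def by (rule hsum_mult_w) (rule convolution_trunc_binom_high)
  finally have "sqrt_part n k ^ 2 - comp0 n ^ k
      = hsum (W n) k (\<lambda>i. convolution a a i - of_nat (k choose i))"
    by (simp add: comp0_def hsum_binomial hsum_diff add.commute)
  moreover have "deg_le (hsum (W n) k (\<lambda>i. convolution a a i - of_nat (k choose i)))
      (Suc m + 2 * n * (k - Suc m))"
    using assms(1) k
    by (intro hsum_deg_le) (auto simp: W_def deg_le_Var_pow a_def convolution_trunc_binom_low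
        binomial_gbinomial)
  moreover have "Suc m + 2 * n * (k - Suc m) \<le> k * n + 1"
    using k assms(3) by simp
  ultimately show ?thesis by (metis deg_le_mono)
qed

lemma deg_le_comp1_square_error:
  assumes "n \<ge> 1" "odd k" "k - 1 \<le> 2 * n" "1 \<le> d" "d < k * n"
  shows "deg_le (comp1 n k d ^ 2 - comp0 n ^ k) (k * n + d)"
proof -
  let ?s = "sqrt_part n k" and ?z = "Var 2 ^ d"
  have s: "deg_le ?s (k * n)" and z: "deg_le ?z d"
    using assms deg_le_sqrt_part by (auto simp: deg_le_Var_pow)
  have mixed: "deg_le (Var 1 * (Var 1 + ?s + ?s + ?z + ?z)) (1 + k * n)"
    using assms(1,5) s z odd_pos[OF assms(2)]
    by (intro deg_le_mult deg_le_Var deg_le_add deg_le_mono[OF deg_le_Var] deg_le_mono[OF z]) auto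
  have root: "deg_le (?s ^ 2 - comp0 n ^ k) (k * n + 1)"
    using assms(1-3) by (rule deg_le_sqrt_part_error)
  have pure: "deg_le (?z * (?s + ?s + ?z)) (d + k * n)"
    using assms(5) s z by (intro deg_le_mult deg_le_add deg_le_mono[OF z]) auto
  have split: "comp1 n k d ^ 2 - comp0 n ^ k
      = Var 1 * (Var 1 + ?s + ?s + ?z + ?z) + (?s ^ 2 - comp0 n ^ k) + ?z * (?s + ?s + ?z)"
    unfolding comp1_def by (simp add: power2_eq_square algebra_simps)
  show ?thesis
    unfolding split
    by (intro deg_le_add deg_le_mono[OF mixed] deg_le_mono[OF root] deg_le_mono[OF pure])
      (use assms(4) in auto)
qed

text \<open>The pure-power computation behind the third component, in any commutative ring.\<close>
lemma pure_part_identity: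
  fixes z :: "'a::comm_ring_1"
  shows "z + z ^ e * ((z ^ a + z ^ b) ^ 2 - z ^ (2 * a))
    = z ^ 1 + z ^ (a + b + e) + z ^ (a + b + e) + z ^ (e + 2 * b)"
proof -
  have "z ^ (2 * a) = z ^ a * z ^ a" "z ^ (a + b + e) = z ^ a * z ^ b * z ^ e"
    "z ^ (e + 2 * b) = z ^ e * z ^ b * z ^ b"
    by (simp_all only: mult_2 power_add mult.assoc)
  then show ?thesis
    by (simp add: power2_eq_square algebra_simps)
qed

lemma comp2_cong_XY:
  assumes "odd k"
  shows "cong_XY (comp2 n k d p)
    (Var 2 ^ 1 + Var 2 ^ (k * n + d + 2 * n * p) + Var 2 ^ (k * n + d + 2 * n * p)
     + Var 2 ^ (2 * n * p + 2 * d))"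
proof -
  have "cong_XY (comp2 n k d p)
      (Var 2 + W n ^ p * ((Var 2 ^ (k * n) + Var 2 ^ d) ^ 2 - W n ^ k))"
    unfolding comp2_def
    by (intro cong_XY_add cong_XY_refl cong_XY_mult cong_XY_diff cong_XY_pow
        comp0_cong_XY comp1_cong_XY assms)
  moreover have "W n ^ k = Var 2 ^ (2 * (k * n))"
    unfolding W_def power_mult[symmetric] by (simp add: ac_simps)
  moreover have "W n ^ p = Var 2 ^ (2 * n * p)"
    unfolding W_def power_mult ..
  ultimately show ?thesis
    using pure_part_identity[of "Var 2" "2 * n * p" "k * n" d] by simp
qed

lemma tdeg_comp2:
  assumes "n \<ge> 1" "odd k" "k - 1 \<le> 2 * n" "1 \<le> d" "d < k * n"
  shows "tdeg (comp2 n k d p) = k * n + d + 2 * n * p"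
proof (rule tdeg_eq_zcoeff)
  have "deg_le (comp0 n ^ p * (comp1 n k d ^ 2 - comp0 n ^ k)) (p * (2 * n) + (k * n + d))"
    using assms by (intro deg_le_mult deg_le_pow deg_le_comp0 deg_le_comp1_square_error)
  then show "deg_le (comp2 n k d p) (k * n + d + 2 * n * p)"
    unfolding comp2_def using assms(4)
    by (intro deg_le_add deg_le_mono[OF deg_le_Var]) (auto elim: deg_le_mono)
  show "zcoeff (comp2 n k d p) (k * n + d + 2 * n * p) \<noteq> 0"
    using assms(1,4,5) zcoeff_cong[OF comp2_cong_XY[OF assms(2)], of _ d p]
    unfolding zcoeff_add zcoeff_Var_pow by simp
qed

lemma mdeg_tri_map:
  assumes "n \<ge> 1" "odd k" "k - 1 \<le> 2 * n" "1 \<le> d" "d < k * n"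
  shows "mdeg3 (tri_map n k d p) = (2 * n, k * n, k * n + d + 2 * n * p)"
  unfolding mdeg3_def tri_map_components
  using assms by (simp add: tdeg_comp0 tdeg_comp1 tdeg_comp2)

lemma decompose_above:
  fixes a b c :: nat
  assumes "a \<ge> 1" "c > b"
  obtains d p where "1 \<le> d" "d \<le> a" "c = b + d + a * p"
proof
  define t where "t = c - b - 1"
  show "1 \<le> t mod a + 1" by simp
  show "t mod a + 1 \<le> a" using assms(1) by (simp add: Suc_leI)
  show "c = b + (t mod a + 1) + a * (t div a)"
    using assms(2) div_mult_mod_eq[of t a] unfolding t_def by (simp add: algebra_simps)
qed

theorem corollary1:
  fixes k n :: nat
  assumes "odd k" and "k \<ge> 3" and "n \<ge> 1" and "2 * n \<ge> k - 1"
  shows "tame_pair (2 * n) (k * n)"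
proof -
  have less: "2 * n < k * n"
  proof -
    have "2 * n < 3 * n" using assms(3) by simp
    also have "\<dots> \<le> k * n" using assms(2) by simp
    finally show ?thesis .
  qed
  have not_dvd: "\<not> 2 * n dvd k * n"
  proof
    assume "2 * n dvd k * n"
    then have "2 dvd k" using assms(3) by (simp add: mult.commute[of k n])
    with assms(1) show False ..
  qed
  have "\<exists>F. tame3 F \<and> mdeg3 F = (2 * n, k * n, c)" if "c > k * n" for c
  proof -
    obtain d p where d: "1 \<le> d" "d \<le> 2 * n" and c: "c = k * n + d + 2 * n * p"
      using decompose_above[of "2 * n" "k * n" c] assms(3) \<open>c > k * n\<close> by auto
    have "d < k * n" using d(2) less by linarith
    then show ?thesis
      unfolding c using tame_tri_map mdeg_tri_map[OF assms(3,1,4) d(1)] by blast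
  qed
  then show ?thesis
    unfolding tame_pair_def using assms(3) less not_dvd by auto
qed

end
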